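(* For every signaling scheme $\mathcal{Z}$ for $\mathcal{D}$ there exists an efficient signaling scheme $\mathcal{Z}^E$ for $\mathcal{D}$ such that: (1) $cs_{v_i}(\mathcal{Z}^E)=cs_{v_i}(\mathcal{Z})$ for every $i\in[n]$; (2) $\mathcal{Z}^E$ consists of at most $n$ signals, whose lowest supports (smallest values with nonzero mass) are pairwise distinct.
   Context: Values and prior. $0<v_1<\dots<v_n$ are reals, and $\mathcal{D}$ is a distribution on $\{v_1,\dots,v_n\}$ with $f_{\mathcal{D}}(v_i)>0$. Signals and pricing. A signal is a distribution $S$ on these values, with $G_S(p)=\Pr_{v\sim S}[v\ge p]$. The seller posts $p^*_S$, the smallest $v$ in the support of $S$ maximizing $v\,G_S(v)$. The surplus of value $v$ is $cs_v(S)=\mathbb{1}[v\ge p^*_S](v-p^*_S)$. Signaling schemes. A signaling scheme is $\mathcal{Z}=\{(S_q,\gamma_q)\}$ with $\gamma_q\ge0$, $\sum\gamma_q=1$ and $\sum_q\gamma_q f_{S_q}=f_{\mathcal{D}}$. Its expected consumer surplus at $v_i$ is $cs_{v_i}(\mathcal{Z})=\sum_q cs_{v_i}(S_q)\gamma_q f_{S_q}(v_i)/f_{\mathcal{D}}(v_i)$. The scheme is efficient if for every signal $S_q$, $p^*_{S_q}$ is the smallest value in the support of $S_q$. *)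

theory Defs
  imports Main "HOL-Library.Multiset" Complex_Main
begin

text \<open>Values are indexed by 0..<n: v 0 < v 1 < ... < v (n-1). A distribution on the
values (prior or signal) is a function on indices.\<close>

definition valid_values :: "nat \<Rightarrow> (nat \<Rightarrow> real) \<Rightarrow> bool" where
  "valid_values n v \<longleftrightarrow> (\<forall>i<n. 0 < v i) \<and> (\<forall>i j. i < j \<longrightarrow> j < n \<longrightarrow> v i < v j)"

definition is_dist :: "nat \<Rightarrow> (nat \<Rightarrow> real) \<Rightarrow> bool" where
  "is_dist n S \<longleftrightarrow> (\<forall>i<n. 0 \<le> S i) \<and> (\<Sum>i<n. S i) = 1"

definition prior :: "nat \<Rightarrow> (nat \<Rightarrow> real) \<Rightarrow> bool" where
  "prior n f \<longleftrightarrow> is_dist n f \<and> (\<forall>i<n. 0 < f i)"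

definition supp :: "nat \<Rightarrow> (nat \<Rightarrow> real) \<Rightarrow> nat set" where
  "supp n S = {i. i < n \<and> 0 < S i}"

definition G :: "nat \<Rightarrow> (nat \<Rightarrow> real) \<Rightarrow> (nat \<Rightarrow> real) \<Rightarrow> real \<Rightarrow> real" where
  "G n v S p = (\<Sum>i\<in>{i. i < n \<and> p \<le> v i}. S i)"

definition price_idx :: "nat \<Rightarrow> (nat \<Rightarrow> real) \<Rightarrow> (nat \<Rightarrow> real) \<Rightarrow> nat" where
  "price_idx n v S = (LEAST i. i \<in> supp n S \<and>
      (\<forall>j\<in>supp n S. v j * G n v S (v j) \<le> v i * G n v S (v i)))"

definition price :: "nat \<Rightarrow> (nat \<Rightarrow> real) \<Rightarrow> (nat \<Rightarrow> real) \<Rightarrow> real" where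
  "price n v S = v (price_idx n v S)"

definition cs_sig :: "nat \<Rightarrow> (nat \<Rightarrow> real) \<Rightarrow> (nat \<Rightarrow> real) \<Rightarrow> nat \<Rightarrow> real" where
  "cs_sig n v S i = (if price n v S \<le> v i then v i - price n v S else 0)"

type_synonym scheme = "((nat \<Rightarrow> real) \<times> real) list"

definition is_scheme :: "nat \<Rightarrow> (nat \<Rightarrow> real) \<Rightarrow> scheme \<Rightarrow> bool" where
  "is_scheme n f Z \<longleftrightarrow>
     (\<forall>(S, \<gamma>) \<in> set Z. is_dist n S \<and> 0 \<le> \<gamma>) \<and>
     (\<Sum>(S, \<gamma>) \<leftarrow> Z. \<gamma>) = 1 \<and>
     (\<forall>i<n. (\<Sum>(S, \<gamma>) \<leftarrow> Z. \<gamma> * S i) = f i)"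

definition cs_scheme :: "nat \<Rightarrow> (nat \<Rightarrow> real) \<Rightarrow> (nat \<Rightarrow> real) \<Rightarrow> scheme \<Rightarrow> nat \<Rightarrow> real" where
  "cs_scheme n v f Z i = (\<Sum>(S, \<gamma>) \<leftarrow> Z. cs_sig n v S i * \<gamma> * S i / f i)"

definition low :: "nat \<Rightarrow> (nat \<Rightarrow> real) \<Rightarrow> nat" where
  "low n S = Min (supp n S)"

definition efficient :: "nat \<Rightarrow> (nat \<Rightarrow> real) \<Rightarrow> scheme \<Rightarrow> bool" where
  "efficient n v Z \<longleftrightarrow> (\<forall>(S, \<gamma>) \<in> set Z. price_idx n v S = low n S)"

end

theory Submission
  imports Defs
begin

text \<open>Pool the buyers by the price they end up facing: a buyer of value \<open>v\<^sub>i\<close> who receives a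
  signal priced at \<open>v\<^sub>p\<close> is moved to pool \<open>min p i\<close>. Buyers at or above the price keep
  their price and surplus; buyers below it had no surplus and, now charged their own value,
  still have none. Pool \<open>l\<close> lives on the values \<open>\<ge> v\<^sub>l\<close> and has mass at \<open>v\<^sub>l\<close>. Posting
  \<open>v\<^sub>l\<close> sells to the whole pool, and this beats every higher price \<open>v\<^sub>j\<close>, because the part
  of the pool above \<open>v\<^sub>l\<close> comes only from signals for which \<open>v\<^sub>l\<close> was already an optimal
  price, so each of them earns at least as much at \<open>v\<^sub>l\<close> as at \<open>v\<^sub>j\<close>. Hence every pool is an
  efficient signal, and the at most \<open>n\<close> nonempty pools have distinct lowest values.\<close>

lemma sum_list_sum_swap:
  "(\<Sum>x\<leftarrow>xs. \<Sum>a\<in>A. F x a) = (\<Sum>a\<in>A. \<Sum>x\<leftarrow>xs. F x a)"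
  by (induction xs) (simp_all add: sum.distrib)

lemma sum_list_map_eq_zero: "(\<And>x. x \<in> set xs \<Longrightarrow> f x = 0) \<Longrightarrow> (\<Sum>x\<leftarrow>xs. f x) = 0"
  by (induction xs) auto

lemma sum_list_filter_upt:
  "(\<Sum>l\<leftarrow>filter P [0..<n]. h l) = (\<Sum>l<n. if P l then h l else 0)"
  by (simp add: sum_list_map_filter' interv_sum_list_conv_sum_set_nat atLeast0LessThan)

lemma valid_values_le_iff:
  assumes "valid_values n v" "i < n" "j < n"
  shows "v i \<le> v j \<longleftrightarrow> i \<le> j"
proof -
  have mono: "\<And>a b. a < b \<Longrightarrow> b < n \<Longrightarrow> v a < v b"
    using assms(1) unfolding valid_values_def by blast
  show ?thesis
    using mono[of i j] mono[of j i] assms(2,3) by (cases i j rule: linorder_cases) auto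
qed

lemma valid_values_pos: "valid_values n v \<Longrightarrow> i < n \<Longrightarrow> 0 < v i"
  unfolding valid_values_def by blast

lemma is_dist_supp_nonempty:
  assumes "is_dist n S"
  shows "supp n S \<noteq> {}"
proof
  assume "supp n S = {}"
  then have "\<forall>i<n. S i = 0"
    using assms unfolding supp_def is_dist_def by force
  then show False
    using assms unfolding is_dist_def by simp
qed

definition revenue :: "nat \<Rightarrow> (nat \<Rightarrow> real) \<Rightarrow> (nat \<Rightarrow> real) \<Rightarrow> nat \<Rightarrow> real" where
  "revenue n v S j = v j * sum S {j..<n}"

lemma revenue_eq_value_mult_G:
  assumes "valid_values n v" "j < n"
  shows "revenue n v S j = v j * G n v S (v j)"
proof -
  have "{i. i < n \<and> v j \<le> v i} = {j..<n}"
    using valid_values_le_iff[OF assms] by auto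
  then show ?thesis
    unfolding G_def revenue_def by simp
qed

lemma price_idx_spec:
  assumes "valid_values n v" "is_dist n S"
  shows "price_idx n v S \<in> supp n S"
    and "\<And>j. j \<in> supp n S \<Longrightarrow> revenue n v S j \<le> revenue n v S (price_idx n v S)"
proof -
  let ?r = "\<lambda>j. v j * G n v S (v j)"
  have fin: "finite (supp n S)"
    unfolding supp_def by simp
  then obtain a where a: "a \<in> supp n S" "Max (?r ` supp n S) = ?r a"
    using obtains_MAX is_dist_supp_nonempty[OF assms(2)] by blast
  have "\<forall>j\<in>supp n S. ?r j \<le> ?r a"
    using fin by (simp flip: a(2))
  with a(1) have "\<exists>i. i \<in> supp n S \<and> (\<forall>j\<in>supp n S. ?r j \<le> ?r i)"
    by blast
  then have "price_idx n v S \<in> supp n S \<and> (\<forall>j\<in>supp n S. ?r j \<le> ?r (price_idx n v S))"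
    unfolding price_idx_def by (rule LeastI_ex)
  moreover have "\<And>j. j \<in> supp n S \<Longrightarrow> ?r j = revenue n v S j"
    using revenue_eq_value_mult_G[OF assms(1)] by (simp add: supp_def)
  ultimately show "price_idx n v S \<in> supp n S"
    and "\<And>j. j \<in> supp n S \<Longrightarrow> revenue n v S j \<le> revenue n v S (price_idx n v S)"
    by auto
qed

lemma revenue_nonneg:
  assumes "valid_values n v" "is_dist n S" "j < n"
  shows "0 \<le> revenue n v S j"
  using assms valid_values_pos[OF assms(1)] unfolding revenue_def is_dist_def
  by (intro mult_nonneg_nonneg sum_nonneg) (auto intro: less_imp_le)

text \<open>An unsupported price loses to the next value up, which sells to the same buyers
  at a higher price.\<close>

lemma revenue_le_if_supp_revenue_le:
  assumes "valid_values n v" "is_dist n S" "0 \<le> R"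
    and supp_le: "\<And>k. k \<in> supp n S \<Longrightarrow> revenue n v S k \<le> R"
    and "j \<le> n"
  shows "revenue n v S j \<le> R"
  using \<open>j \<le> n\<close>
proof (induction j rule: inc_induct)
  case base
  then show ?case
    using \<open>0 \<le> R\<close> by (simp add: revenue_def)
next
  case (step k)
  show ?case
  proof (cases "k \<in> supp n S")
    case True
    then show ?thesis by (rule supp_le)
  next
    case False
    then have "S k = 0"
      using \<open>is_dist n S\<close> \<open>k < n\<close> unfolding supp_def is_dist_def by force
    then have tail: "sum S {k..<n} = sum S {Suc k..<n}"
      using \<open>k < n\<close> by (simp add: sum.atLeast_Suc_lessThan)
    show ?thesis
    proof (cases "Suc k < n")
      case True
      have "0 \<le> sum S {Suc k..<n}"
        using \<open>is_dist n S\<close> unfolding is_dist_def by (intro sum_nonneg) auto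
      moreover have "v k \<le> v (Suc k)"
        using valid_values_le_iff[OF \<open>valid_values n v\<close>] True by simp
      ultimately have "revenue n v S k \<le> revenue n v S (Suc k)"
        unfolding revenue_def tail by (rule mult_right_mono[rotated])
      then show ?thesis
        using step.IH by simp
    next
      case False
      then show ?thesis
        using tail \<open>0 \<le> R\<close> by (simp add: revenue_def)
    qed
  qed
qed

lemma price_idx_revenue_max:
  assumes "valid_values n v" "is_dist n S" "j < n"
  shows "revenue n v S j \<le> revenue n v S (price_idx n v S)"
proof (rule revenue_le_if_supp_revenue_le[OF assms(1,2)])
  show "0 \<le> revenue n v S (price_idx n v S)"
    using price_idx_spec(1)[OF assms(1,2)] revenue_nonneg[OF assms(1,2)] by (simp add: supp_def)
qed (use price_idx_spec(2)[OF assms(1,2)] \<open>j < n\<close> in auto)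

lemma price_idx_eqI:
  assumes "valid_values n v" "l \<in> supp n S"
    and "\<And>j. j \<in> supp n S \<Longrightarrow> l \<le> j \<and> revenue n v S j \<le> revenue n v S l"
  shows "price_idx n v S = l"
  unfolding price_idx_def
proof (rule Least_equality)
  have "\<And>j. j \<in> supp n S \<Longrightarrow> v j * G n v S (v j) = revenue n v S j"
    using revenue_eq_value_mult_G[OF assms(1)] by (simp add: supp_def)
  then show "l \<in> supp n S \<and> (\<forall>j\<in>supp n S. v j * G n v S (v j) \<le> v l * G n v S (v l))"
    using assms(2,3) by simp
qed (use assms(3) in blast)

lemma low_eqI:
  assumes "l \<in> supp n S" "\<And>j. j \<in> supp n S \<Longrightarrow> l \<le> j"
  shows "low n S = l"
  unfolding low_def using assms by (intro Min_eqI) (simp_all add: supp_def)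

lemma cs_sig_eq:
  assumes "valid_values n v" "is_dist n S" "i < n"
  shows "cs_sig n v S i = (if price_idx n v S \<le> i then v i - v (price_idx n v S) else 0)"
  using price_idx_spec(1)[OF assms(1,2)] valid_values_le_iff[OF assms(1) _ assms(3)]
  unfolding cs_sig_def price_def supp_def by auto

locale signal_family =
  fixes n :: nat and v :: "nat \<Rightarrow> real" and Z :: scheme
  assumes valid: "valid_values n v"
    and signal_dist: "(S, \<gamma>) \<in> set Z \<Longrightarrow> is_dist n S"
    and prob_nonneg: "(S, \<gamma>) \<in> set Z \<Longrightarrow> 0 \<le> \<gamma>"
begin

definition pool_mass :: "nat \<Rightarrow> nat \<Rightarrow> real" where
  "pool_mass l i = (\<Sum>(S, \<gamma>)\<leftarrow>Z. if min (price_idx n v S) i = l then \<gamma> * S i else 0)"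

definition priced_mass :: "nat \<Rightarrow> nat \<Rightarrow> real" where
  "priced_mass l i = (\<Sum>(S, \<gamma>)\<leftarrow>Z. (if price_idx n v S = l then \<gamma> else 0) * S i)"

definition pool_weight :: "nat \<Rightarrow> real" where
  "pool_weight l = (\<Sum>i<n. pool_mass l i)"

definition pool_signal :: "nat \<Rightarrow> nat \<Rightarrow> real" where
  "pool_signal l i = pool_mass l i / pool_weight l"

definition pooled_scheme :: scheme where
  "pooled_scheme = map (\<lambda>l. (pool_signal l, pool_weight l)) (filter (\<lambda>l. 0 < pool_weight l) [0..<n])"

lemma signal_mass_nonneg: "(S, \<gamma>) \<in> set Z \<Longrightarrow> i < n \<Longrightarrow> 0 \<le> \<gamma> * S i"
  using signal_dist prob_nonneg unfolding is_dist_def by simp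

lemma pool_mass_nonneg: "i < n \<Longrightarrow> 0 \<le> pool_mass l i"
  unfolding pool_mass_def by (intro sum_list_nonneg) (auto simp: signal_mass_nonneg)

lemma priced_mass_nonneg: "i < n \<Longrightarrow> 0 \<le> priced_mass l i"
  unfolding priced_mass_def by (intro sum_list_nonneg) (auto simp: signal_mass_nonneg)

lemma pool_mass_below: "i < l \<Longrightarrow> pool_mass l i = 0"
  unfolding pool_mass_def by (intro sum_list_map_eq_zero) auto

lemma pool_mass_eq_priced_mass: "l < i \<Longrightarrow> pool_mass l i = priced_mass l i"
  unfolding pool_mass_def priced_mass_def
  by (intro arg_cong[where f = sum_list] map_cong) (auto simp: min_def)

lemma priced_mass_le_pool_mass:
  assumes "l \<le> i" "i < n"
  shows "priced_mass l i \<le> pool_mass l i"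
  unfolding pool_mass_def priced_mass_def
  using assms by (intro sum_list_mono) (auto simp: signal_mass_nonneg)

text \<open>Every signal priced at \<open>l\<close> has positive mass at \<open>l\<close>.\<close>

lemma priced_mass_vanishes:
  assumes "priced_mass l l = 0"
  shows "priced_mass l i = 0"
proof -
  have "\<gamma> = 0" if "(S, \<gamma>) \<in> set Z" "price_idx n v S = l" for S \<gamma>
  proof -
    have "l < n" "0 < S l"
      using price_idx_spec(1)[OF valid signal_dist[OF that(1)]] that(2) by (simp_all add: supp_def)
    have "\<forall>x\<in>set Z. (case x of (S, \<gamma>) \<Rightarrow> (if price_idx n v S = l then \<gamma> else 0) * S l) = 0"
      using assms \<open>l < n\<close> signal_mass_nonneg unfolding priced_mass_def
      by (subst (asm) sum_list_nonneg_eq_0_iff) auto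
    then have "\<gamma> * S l = 0"
      using that by fastforce
    with \<open>0 < S l\<close> show "\<gamma> = 0"
      by simp
  qed
  then show ?thesis
    unfolding priced_mass_def by (intro sum_list_map_eq_zero) auto
qed

lemma sum_pool_mass_weighted:
  assumes "i < n"
  shows "(\<Sum>l<n. c l * pool_mass l i) = (\<Sum>(S, \<gamma>)\<leftarrow>Z. c (min (price_idx n v S) i) * (\<gamma> * S i))"
proof -
  have "(\<Sum>l<n. c l * pool_mass l i)
      = (\<Sum>l<n. \<Sum>(S, \<gamma>)\<leftarrow>Z. if min (price_idx n v S) i = l then c l * (\<gamma> * S i) else 0)"
    unfolding pool_mass_def sum_list_const_mult[symmetric]
    by (intro sum.cong refl arg_cong[where f = sum_list] map_cong) auto
  also have "\<dots> = (\<Sum>(S, \<gamma>)\<leftarrow>Z. \<Sum>l<n. if min (price_idx n v S) i = l then c l * (\<gamma> * S i) else 0)"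
    by (simp only: split_def sum_list_sum_swap)
  also have "\<dots> = (\<Sum>(S, \<gamma>)\<leftarrow>Z. c (min (price_idx n v S) i) * (\<gamma> * S i))"
    using assms by (simp add: case_prod_beta min_less_iff_disj)
  finally show ?thesis .
qed

lemma sum_pool_mass: "i < n \<Longrightarrow> (\<Sum>l<n. pool_mass l i) = (\<Sum>(S, \<gamma>)\<leftarrow>Z. \<gamma> * S i)"
  using sum_pool_mass_weighted[of i "\<lambda>_. 1"] by simp

lemma pool_weight_nonneg: "0 \<le> pool_weight l"
  unfolding pool_weight_def by (intro sum_nonneg) (simp add: pool_mass_nonneg)

lemma pool_weight_eq_tail: "l \<le> n \<Longrightarrow> pool_weight l = sum (pool_mass l) {l..<n}"
  unfolding pool_weight_def atLeast0LessThan[symmetric]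
  by (simp add: pool_mass_below flip: sum.atLeastLessThan_concat[of 0 l n])

lemma pool_index_less:
  assumes "0 < pool_weight l"
  shows "l < n"
proof (rule ccontr)
  assume "\<not> l < n"
  then have "pool_weight l = 0"
    unfolding pool_weight_def by (simp add: pool_mass_below)
  with assms show False
    by simp
qed

lemma pool_mass_at_pool_pos:
  assumes "0 < pool_weight l"
  shows "0 < pool_mass l l"
proof (rule ccontr)
  assume not_pos: "\<not> 0 < pool_mass l l"
  have "l < n"
    using pool_index_less[OF assms] .
  then have "pool_mass l l = 0"
    using pool_mass_nonneg[of l l] not_pos by simp
  then have "priced_mass l l = 0"
    using priced_mass_nonneg[of l l] priced_mass_le_pool_mass[of l l] \<open>l < n\<close>
    by simp
  then have "\<forall>i<n. pool_mass l i = 0"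
    using \<open>pool_mass l l = 0\<close> pool_mass_below pool_mass_eq_priced_mass priced_mass_vanishes
    by (metis linorder_neqE_nat)
  then show False
    using assms unfolding pool_weight_def by simp
qed

lemma revenue_priced_mass:
  "v j * sum (priced_mass l) {j..<n}
     = (\<Sum>(S, \<gamma>)\<leftarrow>Z. (if price_idx n v S = l then \<gamma> else 0) * revenue n v S j)"
proof -
  have "sum (priced_mass l) {j..<n} = (\<Sum>(S, \<gamma>)\<leftarrow>Z. (if price_idx n v S = l then \<gamma> else 0) * sum S {j..<n})"
    unfolding priced_mass_def by (simp only: split_def sum_list_sum_swap[symmetric] sum_distrib_left)
  then show ?thesis
    unfolding revenue_def by (simp add: sum_list_const_mult[symmetric] split_def mult.left_commute)
qed

lemma priced_revenue_le:
  assumes "j < n"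
  shows "v j * sum (priced_mass l) {j..<n} \<le> v l * sum (priced_mass l) {l..<n}"
  unfolding revenue_priced_mass
proof (intro sum_list_mono)
  fix x assume "x \<in> set Z"
  moreover obtain S \<gamma> where "x = (S, \<gamma>)"
    by (cases x)
  ultimately have x: "x = (S, \<gamma>)" "(S, \<gamma>) \<in> set Z"
    by simp_all
  then have "price_idx n v S = l \<Longrightarrow> revenue n v S j \<le> revenue n v S l"
    using price_idx_revenue_max[OF valid signal_dist assms] by blast
  then show "(case x of (S, \<gamma>) \<Rightarrow> (if price_idx n v S = l then \<gamma> else 0) * revenue n v S j)
      \<le> (case x of (S, \<gamma>) \<Rightarrow> (if price_idx n v S = l then \<gamma> else 0) * revenue n v S l)"
    using prob_nonneg[OF x(2)] x(1) by (simp add: mult_left_mono)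
qed

lemma pool_revenue_le:
  assumes "l \<le> j" "j < n"
  shows "v j * sum (pool_mass l) {j..<n} \<le> v l * pool_weight l"
proof (cases "l = j")
  case True
  then show ?thesis
    using assms by (simp add: pool_weight_eq_tail)
next
  case False
  then have "l < j"
    using assms(1) by simp
  then have "v j * sum (pool_mass l) {j..<n} = v j * sum (priced_mass l) {j..<n}"
    by (simp add: pool_mass_eq_priced_mass)
  also have "\<dots> \<le> v l * sum (priced_mass l) {l..<n}"
    using priced_revenue_le[OF assms(2)] .
  also have "\<dots> \<le> v l * sum (pool_mass l) {l..<n}"
    using valid_values_pos[OF valid, of l] assms
    by (intro mult_left_mono sum_mono priced_mass_le_pool_mass) auto
  finally show ?thesis
    using assms by (simp add: pool_weight_eq_tail)
qed

lemma supp_pool_signal: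
  assumes "0 < pool_weight l"
  shows "supp n (pool_signal l) = {i. i < n \<and> 0 < pool_mass l i}"
  unfolding supp_def pool_signal_def using assms by (auto simp: zero_less_divide_iff)

lemma pool_le_supp_pool_signal:
  assumes "0 < pool_weight l" "j \<in> supp n (pool_signal l)"
  shows "l \<le> j"
  using assms pool_mass_below[of j l] by (force simp: supp_pool_signal)

lemma pool_in_supp_pool_signal: "0 < pool_weight l \<Longrightarrow> l \<in> supp n (pool_signal l)"
  using pool_index_less pool_mass_at_pool_pos by (simp add: supp_pool_signal)

lemma is_dist_pool_signal:
  assumes "0 < pool_weight l"
  shows "is_dist n (pool_signal l)"
  using assms pool_mass_nonneg
  unfolding is_dist_def pool_signal_def by (simp add: sum_divide_distrib[symmetric] pool_weight_def)

lemma revenue_pool_signal: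
  "revenue n v (pool_signal l) j = v j * sum (pool_mass l) {j..<n} / pool_weight l"
  unfolding revenue_def pool_signal_def by (simp add: sum_divide_distrib[symmetric])

lemma price_idx_pool_signal:
  assumes "0 < pool_weight l"
  shows "price_idx n v (pool_signal l) = l"
proof (rule price_idx_eqI[OF valid pool_in_supp_pool_signal[OF assms]])
  fix j assume j: "j \<in> supp n (pool_signal l)"
  then have "l \<le> j" "j < n"
    using pool_le_supp_pool_signal[OF assms] by (auto simp: supp_def)
  then have "revenue n v (pool_signal l) j \<le> v l"
    using pool_revenue_le assms by (simp add: revenue_pool_signal pos_divide_le_eq)
  also have "\<dots> = revenue n v (pool_signal l) l"
    using assms pool_index_less[OF assms] by (simp add: revenue_pool_signal pool_weight_eq_tail)
  finally show "l \<le> j \<and> revenue n v (pool_signal l) j \<le> revenue n v (pool_signal l) l"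
    using \<open>l \<le> j\<close> by simp
qed

lemma low_pool_signal: "0 < pool_weight l \<Longrightarrow> low n (pool_signal l) = l"
  by (intro low_eqI pool_in_supp_pool_signal pool_le_supp_pool_signal)

lemma pool_weight_mult_signal:
  assumes "i < n"
  shows "pool_weight l * pool_signal l i = pool_mass l i"
proof (cases "pool_weight l = 0")
  case True
  then have "pool_mass l i = 0"
    using assms pool_mass_nonneg sum_nonneg_eq_0_iff[of "{..<n}" "pool_mass l"]
    unfolding pool_weight_def by simp
  then show ?thesis
    by (simp add: pool_signal_def)
next
  case False
  then show ?thesis
    by (simp add: pool_signal_def)
qed

lemma set_pooled_scheme:
  "set pooled_scheme = (\<lambda>l. (pool_signal l, pool_weight l)) ` {l. l < n \<and> 0 < pool_weight l}"
  unfolding pooled_scheme_def by auto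

lemma sum_list_pooled_scheme:
  assumes "\<And>S. F S 0 = 0"
  shows "(\<Sum>(S, \<gamma>)\<leftarrow>pooled_scheme. F S \<gamma>) = (\<Sum>l<n. F (pool_signal l) (pool_weight l))"
proof -
  have "\<not> 0 < pool_weight l \<Longrightarrow> pool_weight l = 0" for l
    using pool_weight_nonneg[of l] by simp
  then show ?thesis
    unfolding pooled_scheme_def using assms by (simp add: sum_list_filter_upt comp_def) metis
qed

lemma efficient_pooled_scheme: "efficient n v pooled_scheme"
  unfolding efficient_def set_pooled_scheme by (simp add: price_idx_pool_signal low_pool_signal)

lemma length_pooled_scheme: "length pooled_scheme \<le> n"
  unfolding pooled_scheme_def using length_filter_le[of _ "[0..<n]"] by simp

lemma distinct_low_pooled_scheme: "distinct (map (\<lambda>(S, \<gamma>). low n S) pooled_scheme)"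
proof -
  have "map (\<lambda>(S, \<gamma>). low n S) pooled_scheme = filter (\<lambda>l. 0 < pool_weight l) [0..<n]"
    unfolding pooled_scheme_def by (simp add: comp_def, intro map_idI) (simp add: low_pool_signal)
  then show ?thesis
    by simp
qed

lemma is_scheme_pooled_scheme:
  assumes "is_scheme n f Z"
  shows "is_scheme n f pooled_scheme"
  unfolding is_scheme_def
proof (intro conjI allI impI)
  show "\<forall>(S, \<gamma>)\<in>set pooled_scheme. is_dist n S \<and> 0 \<le> \<gamma>"
    unfolding set_pooled_scheme by (auto simp: is_dist_pool_signal pool_weight_nonneg)
  have "(\<Sum>(S, \<gamma>)\<leftarrow>pooled_scheme. \<gamma>) = (\<Sum>l<n. \<Sum>i<n. pool_mass l i)"
    by (simp add: sum_list_pooled_scheme pool_weight_def)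
  also have "\<dots> = (\<Sum>i<n. \<Sum>(S, \<gamma>)\<leftarrow>Z. \<gamma> * S i)"
    by (subst sum.swap) (simp add: sum_pool_mass)
  also have "\<dots> = (\<Sum>(S, \<gamma>)\<leftarrow>Z. \<gamma> * (\<Sum>i<n. S i))"
    by (simp only: split_def sum_list_sum_swap[symmetric] sum_distrib_left)
  also have "\<dots> = (\<Sum>(S, \<gamma>)\<leftarrow>Z. \<gamma>)"
    using signal_dist unfolding is_dist_def
    by (intro arg_cong[where f = sum_list] map_cong) auto
  finally show "(\<Sum>(S, \<gamma>)\<leftarrow>pooled_scheme. \<gamma>) = 1"
    using assms unfolding is_scheme_def by simp
  fix i assume "i < n"
  then have "(\<Sum>(S, \<gamma>)\<leftarrow>pooled_scheme. \<gamma> * S i) = (\<Sum>(S, \<gamma>)\<leftarrow>Z. \<gamma> * S i)"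
    by (simp add: sum_list_pooled_scheme pool_weight_mult_signal sum_pool_mass)
  then show "(\<Sum>(S, \<gamma>)\<leftarrow>pooled_scheme. \<gamma> * S i) = f i"
    using assms \<open>i < n\<close> unfolding is_scheme_def by simp
qed

lemma cs_scheme_pooled_scheme:
  assumes "i < n"
  shows "cs_scheme n v f pooled_scheme i = cs_scheme n v f Z i"
proof -
  define c where "c l = (if l \<le> i then v i - v l else 0)" for l
  have cs_pool: "cs_sig n v (pool_signal l) i * pool_mass l i = c l * pool_mass l i" for l
  proof (cases "0 < pool_weight l")
    case True
    then show ?thesis
      using cs_sig_eq[OF valid is_dist_pool_signal assms] by (simp add: price_idx_pool_signal c_def)
  next
    case False
    then have "pool_mass l i = 0"
      using pool_weight_mult_signal[OF assms, of l] pool_weight_nonneg[of l] by simp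
    then show ?thesis
      by simp
  qed
  have cs_signal: "c (min (price_idx n v S) i) = cs_sig n v S i" if "(S, \<gamma>) \<in> set Z" for S \<gamma>
    using cs_sig_eq[OF valid signal_dist[OF that] assms] by (simp add: c_def min_def)
  have "cs_scheme n v f pooled_scheme i = (\<Sum>l<n. c l * pool_mass l i) / f i"
    unfolding cs_scheme_def
    by (simp add: sum_list_pooled_scheme sum_divide_distrib mult.assoc pool_weight_mult_signal[OF assms]
        mult.left_commute[of _ "pool_weight _"] cs_pool)
  also have "\<dots> = (\<Sum>(S, \<gamma>)\<leftarrow>Z. c (min (price_idx n v S) i) * (\<gamma> * S i)) / f i"
    using sum_pool_mass_weighted[OF assms] by simp
  also have "\<dots> = cs_scheme n v f Z i"
    unfolding cs_scheme_def divide_inverse sum_list_mult_const[symmetric]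
    using cs_signal by (intro arg_cong[where f = sum_list] map_cong) auto
  finally show ?thesis .
qed

end

theorem lemma9:
  fixes n :: nat and v f :: "nat \<Rightarrow> real" and Z :: scheme
  assumes "valid_values n v" and "prior n f" and "is_scheme n f Z"
  shows "\<exists>ZE. is_scheme n f ZE \<and> efficient n v ZE \<and>
           (\<forall>i<n. cs_scheme n v f ZE i = cs_scheme n v f Z i) \<and>
           length ZE \<le> n \<and> distinct (map (\<lambda>(S, \<gamma>). low n S) ZE)"
proof -
  interpret signal_family n v Z
    using assms(1,3) by unfold_locales (auto simp: is_scheme_def)
  show ?thesis
    using is_scheme_pooled_scheme[OF assms(3)] efficient_pooled_scheme cs_scheme_pooled_scheme
      length_pooled_scheme distinct_low_pooled_scheme
    by blast
qed

end
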